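(* Let $A$ be an algebra over a field $K$, let $A_1$ be a linear subspace with $A=A_1\oplus A_0$, and for a map $T:A\to A$ write $T=T_1+T_0$ where $T_1(A)\subseteq A_1$ and $T_0(A)\subseteq A_0$ (the components of $T$ with respect to this direct sum). Then: (i) $T$ is a weak multiplier if and only if $T_1$ is a weak multiplier; and if $T$ is a weak multiplier, then $T_1$ is $K$-linear and $T_1(A_0)=\{0\}$. (ii) If $T_1$ is a multiplier and $T_0(xy)=0$ for all $x,y\in A$, then $T$ is a multiplier. If moreover $A_1$ is a subalgebra of $A$, the converse holds: if $T$ is a multiplier then $T_1$ is a multiplier and $T_0(xy)=0$ for all $x,y\in A$. (iii) Suppose $A_1$ is a subalgebra of $A$. Let $\pi:A\to A_1$ be the projection along $A_0$ and $\mu:A_1\to A$ the inclusion, and define $\Phi:(A_1)^{A_1}\to A^A$ by $\Phi(R)=\mu\circ R\circ\pi$. Then $\Phi$ restricts to an algebra isomorphism from $M(A_1)$ onto $M_1(A)$, and to a bijective linear map from $M'(A_1)$ onto $M'_1(A)$ preserving the Jordan product $S\circ U=SU+US$ (a Jordan isomorphism).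
   Context: An algebra over $K$ is a $K$-vector space with a bilinear, not necessarily associative multiplication. A map $T:A\to A$ (not assumed linear) is a weak multiplier if $xT(y)=T(x)y$ for all $x,y\in A$, and a multiplier if $xT(y)=T(xy)=T(x)y$ for all $x,y\in A$. $M(B)$, $M'(B)$ denote the sets of multipliers and weak multipliers of an algebra $B$. $A_0=\mathrm{Ann}_l(A)\cap\mathrm{Ann}_r(A)$ with $\mathrm{Ann}_l(A)=\{a: ax=0\ \forall x\}$, $\mathrm{Ann}_r(A)=\{a: xa=0\ \forall x\}$. Given the decomposition $A=A_1\oplus A_0$, $M_1(A)$ (resp. $M'_1(A)$) is the set of multipliers (resp. weak multipliers) $T$ of $A$ with $T(A)\subseteq A_1$. *)

theory Defs
  imports Complex_Main "HOL-Library.FuncSet"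
begin

definition algebra_over :: "('k::field \<Rightarrow> 'v::ab_group_add \<Rightarrow> 'v) \<Rightarrow> ('v \<Rightarrow> 'v \<Rightarrow> 'v) \<Rightarrow> bool" where
  "algebra_over scale mult \<longleftrightarrow> vector_space scale
     \<and> (\<forall>x. Vector_Spaces.linear scale scale (mult x))
     \<and> (\<forall>y. Vector_Spaces.linear scale scale (\<lambda>x. mult x y))"

text \<open>A_0 = Ann_l(A) \<inter> Ann_r(A).\<close>
definition ann0 :: "('v::zero \<Rightarrow> 'v \<Rightarrow> 'v) \<Rightarrow> 'v set" where
  "ann0 mult = {a. (\<forall>x. mult a x = 0)} \<inter> {a. (\<forall>x. mult x a = 0)}"

definition subalgebra :: "('k::field \<Rightarrow> 'v::ab_group_add \<Rightarrow> 'v) \<Rightarrow> ('v \<Rightarrow> 'v \<Rightarrow> 'v) \<Rightarrow> 'v set \<Rightarrow> bool" where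
  "subalgebra scale mult S \<longleftrightarrow> module.subspace scale S \<and> (\<forall>x\<in>S. \<forall>y\<in>S. mult x y \<in> S)"

text \<open>Weak multipliers / multipliers of the algebra B (a subset of the ambient space,
  closed under mult), for a map T (only its values on B matter).\<close>
definition weak_multiplier :: "('v \<Rightarrow> 'v \<Rightarrow> 'v) \<Rightarrow> 'v set \<Rightarrow> ('v \<Rightarrow> 'v) \<Rightarrow> bool" where
  "weak_multiplier mult B T \<longleftrightarrow> (\<forall>x\<in>B. \<forall>y\<in>B. mult x (T y) = mult (T x) y)"

definition multiplier :: "('v \<Rightarrow> 'v \<Rightarrow> 'v) \<Rightarrow> 'v set \<Rightarrow> ('v \<Rightarrow> 'v) \<Rightarrow> bool" where
  "multiplier mult B T \<longleftrightarrow> (\<forall>x\<in>B. \<forall>y\<in>B. mult x (T y) = T (mult x y) \<and> T (mult x y) = mult (T x) y)"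

text \<open>M(B) and M'(B): maps B \<rightarrow> B (represented extensionally) that are (weak) multipliers.
  For B = UNIV these are all maps A \<rightarrow> A.\<close>
definition Mults :: "('v \<Rightarrow> 'v \<Rightarrow> 'v) \<Rightarrow> 'v set \<Rightarrow> ('v \<Rightarrow> 'v) set" where
  "Mults mult B = {T \<in> B \<rightarrow>\<^sub>E B. multiplier mult B T}"

definition WMults :: "('v \<Rightarrow> 'v \<Rightarrow> 'v) \<Rightarrow> 'v set \<Rightarrow> ('v \<Rightarrow> 'v) set" where
  "WMults mult B = {T \<in> B \<rightarrow>\<^sub>E B. weak_multiplier mult B T}"

definition Mults1 :: "('v \<Rightarrow> 'v \<Rightarrow> 'v) \<Rightarrow> 'v set \<Rightarrow> ('v \<Rightarrow> 'v) set" where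
  "Mults1 mult A1 = {T \<in> Mults mult UNIV. range T \<subseteq> A1}"

definition WMults1 :: "('v \<Rightarrow> 'v \<Rightarrow> 'v) \<Rightarrow> 'v set \<Rightarrow> ('v \<Rightarrow> 'v) set" where
  "WMults1 mult A1 = {T \<in> WMults mult UNIV. range T \<subseteq> A1}"

definition proj_along :: "'v::ab_group_add set \<Rightarrow> 'v set \<Rightarrow> 'v \<Rightarrow> 'v" where
  "proj_along A1 A0 x = (THE a. a \<in> A1 \<and> x - a \<in> A0)"

definition fadd :: "'v set \<Rightarrow> ('v \<Rightarrow> 'v::plus) \<Rightarrow> ('v \<Rightarrow> 'v) \<Rightarrow> ('v \<Rightarrow> 'v)" where
  "fadd B R S = restrict (\<lambda>x. R x + S x) B"

definition fscale :: "('k \<Rightarrow> 'v \<Rightarrow> 'v) \<Rightarrow> 'v set \<Rightarrow> 'k \<Rightarrow> ('v \<Rightarrow> 'v) \<Rightarrow> ('v \<Rightarrow> 'v)" where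
  "fscale scale B c R = restrict (\<lambda>x. scale c (R x)) B"

definition jordan :: "'v set \<Rightarrow> ('v \<Rightarrow> 'v::plus) \<Rightarrow> ('v \<Rightarrow> 'v) \<Rightarrow> ('v \<Rightarrow> 'v)" where
  "jordan B S U = fadd B (compose B S U) (compose B U S)"

end

theory Submission
  imports Defs
begin

text \<open>Since \<open>A\<^sub>0\<close> annihilates the whole algebra, a product only sees the \<open>A\<^sub>1\<close>-components of its
  factors: \<open>xy = \<pi>(x)\<pi>(y)\<close>. Because \<open>A\<^sub>1 \<inter> A\<^sub>0 = 0\<close>, an element of \<open>A\<^sub>1\<close> is determined by its left
  and right products with all of \<open>A\<close>. For a weak multiplier \<open>T\<^sub>1\<close> with values in \<open>A\<^sub>1\<close> the identity
  \<open>x T\<^sub>1(y) = T\<^sub>1(x) y\<close> moves \<open>T\<^sub>1\<close> to the other factor, so \<open>T\<^sub>1\<close> inherits additivity and homogeneity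
  from the product, kills \<open>A\<^sub>0\<close> and satisfies \<open>T\<^sub>1 \<circ> \<pi> = T\<^sub>1\<close>; the last fact makes \<open>R \<mapsto> R \<circ> \<pi>\<close>
  surjective onto (weak) multipliers with values in \<open>A\<^sub>1\<close>. When \<open>A\<^sub>1\<close> is a subalgebra, all products
  lie in \<open>A\<^sub>1\<close>, so \<open>T\<^sub>0(xy) = T(xy) - T\<^sub>1(xy) \<in> A\<^sub>1 \<inter> A\<^sub>0 = 0\<close> and \<open>\<pi>(xy) = xy\<close>.\<close>

locale nonassoc_algebra = vector_space scale
  for scale :: "'k::field \<Rightarrow> 'v::ab_group_add \<Rightarrow> 'v" +
  fixes mult :: "'v \<Rightarrow> 'v \<Rightarrow> 'v"
  assumes linear_mult_right: "Vector_Spaces.linear scale scale (mult x)"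
    and linear_mult_left: "Vector_Spaces.linear scale scale (\<lambda>x. mult x y)"
begin

lemma mult_add_right: "mult x (y + z) = mult x y + mult x z"
  and mult_scale_right: "mult x (scale c y) = scale c (mult x y)"
  using linear_mult_right[of x] by (simp_all add: Vector_Spaces.linear_iff)

lemma mult_add_left: "mult (x + y) z = mult x z + mult y z"
  and mult_scale_left: "mult (scale c x) z = scale c (mult x z)"
  using linear_mult_left[of z] by (simp_all add: Vector_Spaces.linear_iff)

lemma mult_diff_right: "mult x (y - z) = mult x y - mult x z"
  using mult_add_right[of x "y - z" z] by (simp add: algebra_simps)

lemma mult_diff_left: "mult (x - y) z = mult x z - mult y z"
  using mult_add_left[of "x - y" y z] by (simp add: algebra_simps)

lemma mult_zero_right [simp]: "mult x 0 = 0"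
  using mult_diff_right[of x 0 0] by simp

lemma mult_zero_left [simp]: "mult 0 x = 0"
  using mult_diff_left[of 0 0 x] by simp

lemma ann0_mult_left: "b \<in> ann0 mult \<Longrightarrow> mult b x = 0"
  and ann0_mult_right: "b \<in> ann0 mult \<Longrightarrow> mult x b = 0"
  by (simp_all add: ann0_def)

lemma zero_in_ann0: "0 \<in> ann0 mult"
  by (simp add: ann0_def)

lemma diff_in_ann0:
  assumes "a \<in> ann0 mult" and "b \<in> ann0 mult"
  shows "a - b \<in> ann0 mult"
  using assms unfolding ann0_def by (simp add: mult_diff_left mult_diff_right)

lemma mult_plus_ann0_right: "b \<in> ann0 mult \<Longrightarrow> mult x (a + b) = mult x a"
  and mult_plus_ann0_left: "b \<in> ann0 mult \<Longrightarrow> mult (a + b) x = mult a x"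
  by (simp_all add: mult_add_right mult_add_left ann0_mult_right ann0_mult_left)

lemma weak_multiplier_plus_ann0_iff:
  assumes "range T0 \<subseteq> ann0 mult"
  shows "weak_multiplier mult UNIV (\<lambda>x. T1 x + T0 x) \<longleftrightarrow> weak_multiplier mult UNIV T1"
  using assms by (simp add: weak_multiplier_def mult_plus_ann0_right mult_plus_ann0_left rangeI
      subsetD)

lemma multiplier_plus_ann0_iff:
  assumes "range T0 \<subseteq> ann0 mult" and "\<And>x y. T0 (mult x y) = 0"
  shows "multiplier mult UNIV (\<lambda>x. T1 x + T0 x) \<longleftrightarrow> multiplier mult UNIV T1"
  using assms by (simp add: multiplier_def mult_plus_ann0_right mult_plus_ann0_left rangeI
      subsetD)

end

lemma algebra_over_iff_nonassoc_algebra: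
  "algebra_over scale mult \<longleftrightarrow> nonassoc_algebra scale mult"
  unfolding algebra_over_def nonassoc_algebra_def nonassoc_algebra_axioms_def by blast

lemma multiplier_imp_weak_multiplier:
  "multiplier mult B T \<Longrightarrow> weak_multiplier mult B T"
  by (simp add: multiplier_def weak_multiplier_def)

locale ann0_complement = nonassoc_algebra scale mult
  for scale :: "'k::field \<Rightarrow> 'v::ab_group_add \<Rightarrow> 'v" and mult +
  fixes A1 :: "'v set"
  assumes subspace_A1: "subspace A1"
    and A1_inter_ann0: "A1 \<inter> ann0 mult = {0}"
    and A1_plus_ann0: "\<forall>x. \<exists>a\<in>A1. \<exists>b\<in>ann0 mult. x = a + b"
begin

lemma A1_ann0_eq_zero: "a \<in> A1 \<Longrightarrow> a \<in> ann0 mult \<Longrightarrow> a = 0"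
  using A1_inter_ann0 by blast

lemma A1_eqI:
  assumes "a \<in> A1" "b \<in> A1" "\<And>x. mult a x = mult b x" "\<And>x. mult x a = mult x b"
  shows "a = b"
proof -
  have "a - b \<in> A1"
    using assms(1,2) subspace_A1 subspace_diff by blast
  moreover have "a - b \<in> ann0 mult"
    using assms(3,4) unfolding ann0_def by (simp add: mult_diff_left mult_diff_right)
  ultimately show ?thesis
    using A1_ann0_eq_zero[of "a - b"] by simp
qed

abbreviation proj :: "'v \<Rightarrow> 'v" where
  "proj \<equiv> proj_along A1 (ann0 mult)"

lemma proj_eqI:
  assumes a: "a \<in> A1" "x - a \<in> ann0 mult"
  shows "proj x = a"
  unfolding proj_along_def
proof (rule the_equality)
  fix a' assume a': "a' \<in> A1 \<and> x - a' \<in> ann0 mult"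
  have "a' - a \<in> A1"
    using a a' subspace_A1 subspace_diff by blast
  moreover have "(x - a) - (x - a') \<in> ann0 mult"
    using diff_in_ann0 a a' by blast
  ultimately show "a' = a"
    using A1_ann0_eq_zero[of "a' - a"] by simp
qed (use a in auto)

lemma proj_in_A1: "proj x \<in> A1"
  and diff_proj_in_ann0: "x - proj x \<in> ann0 mult"
proof -
  obtain a b where "a \<in> A1" "b \<in> ann0 mult" "x = a + b"
    using A1_plus_ann0 by blast
  moreover from this have "proj x = a"
    by (intro proj_eqI) auto
  ultimately show "proj x \<in> A1" "x - proj x \<in> ann0 mult"
    by auto
qed

lemma proj_eq_self: "a \<in> A1 \<Longrightarrow> proj a = a"
  by (rule proj_eqI) (simp_all add: zero_in_ann0)

lemma mult_proj_left [simp]: "mult (proj x) y = mult x y"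
  using ann0_mult_left[OF diff_proj_in_ann0[of x]] by (simp add: mult_diff_left)

lemma mult_proj_right [simp]: "mult x (proj y) = mult x y"
  using ann0_mult_right[OF diff_proj_in_ann0[of y]] by (simp add: mult_diff_right)

context
  fixes T :: "'v \<Rightarrow> 'v"
  assumes weak: "weak_multiplier mult UNIV T" and range_T: "range T \<subseteq> A1"
begin

private lemma weak_mult: "mult x (T y) = mult (T x) y"
  using weak by (simp add: weak_multiplier_def)

private lemma T_in_A1: "T x \<in> A1"
  using range_T by blast

lemma weak_multiplier_proj: "T (proj x) = T x"
proof (rule A1_eqI)
  show "mult y (T (proj x)) = mult y (T x)" for y
    by (simp add: weak_mult)
  show "mult (T (proj x)) y = mult (T x) y" for y
    by (metis weak_mult mult_proj_left)
qed (simp_all add: T_in_A1)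

lemma weak_multiplier_image_ann0: "T ` ann0 mult = {0}"
proof -
  have "T b = 0" if "b \<in> ann0 mult" for b
  proof (rule A1_eqI)
    show "mult y (T b) = mult y 0" for y
      using ann0_mult_right[OF that] by (simp add: weak_mult)
    show "mult (T b) y = mult 0 y" for y
      using ann0_mult_left[OF that] by (metis weak_mult mult_zero_left)
  qed (simp_all add: T_in_A1 subspace_0[OF subspace_A1])
  then show ?thesis
    using zero_in_ann0 by (auto intro!: image_eqI[where x = 0])
qed

lemma weak_multiplier_linear: "Vector_Spaces.linear scale scale T"
proof -
  have "T (x + y) = T x + T y" for x y
  proof (rule A1_eqI)
    show "mult z (T (x + y)) = mult z (T x + T y)" for z
      by (simp add: weak_mult mult_add_left mult_add_right)
    show "mult (T (x + y)) z = mult (T x + T y) z" for z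
      by (metis weak_mult mult_add_left mult_add_right)
  qed (simp_all add: T_in_A1 subspace_add[OF subspace_A1])
  moreover have "T (scale c x) = scale c (T x)" for c x
  proof (rule A1_eqI)
    show "mult z (T (scale c x)) = mult z (scale c (T x))" for z
      by (simp add: weak_mult mult_scale_left mult_scale_right)
    show "mult (T (scale c x)) z = mult (scale c (T x)) z" for z
      by (metis weak_mult mult_scale_left mult_scale_right)
  qed (simp_all add: T_in_A1 subspace_scale[OF subspace_A1])
  ultimately show ?thesis
    by (simp add: Vector_Spaces.linear_iff vector_space_axioms)
qed

end

lemma mult_in_A1:
  assumes "subalgebra scale mult A1"
  shows "mult x y \<in> A1"
proof -
  have "mult (proj x) (proj y) \<in> A1"
    using assms proj_in_A1 by (simp add: subalgebra_def del: mult_proj_left mult_proj_right)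
  then show ?thesis
    by simp
qed

lemma proj_mult: "subalgebra scale mult A1 \<Longrightarrow> proj (mult x y) = mult x y"
  by (simp add: proj_eq_self mult_in_A1)

lemma multiplier_ann0_part_vanishes:
  assumes sub: "subalgebra scale mult A1"
    and mult_T: "multiplier mult UNIV (\<lambda>x. T1 x + T0 x)"
    and range_T1: "range T1 \<subseteq> A1" and range_T0: "range T0 \<subseteq> ann0 mult"
  shows "T0 (mult x y) = 0"
proof (rule A1_ann0_eq_zero)
  have "mult x (T1 y + T0 y) = T1 (mult x y) + T0 (mult x y)"
    using mult_T unfolding multiplier_def by blast
  then have "T0 (mult x y) = mult x (T1 y + T0 y) - T1 (mult x y)"
    by simp
  then show "T0 (mult x y) \<in> A1"
    using range_T1 mult_in_A1[OF sub] subspace_diff[OF subspace_A1] by (simp add: rangeI subsetD)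
  show "T0 (mult x y) \<in> ann0 mult"
    using range_T0 by blast
qed

text \<open>The map \<open>\<Phi>(R) = \<mu> \<circ> R \<circ> \<pi>\<close> of the paper; \<open>\<mu>\<close> is invisible since \<open>A\<^sub>1\<close> is a subset of the
  ambient space.\<close>
definition lift :: "('v \<Rightarrow> 'v) \<Rightarrow> 'v \<Rightarrow> 'v" where
  "lift R x = R (proj x)"

lemma weak_multiplier_lift_iff: "weak_multiplier mult UNIV (lift R) \<longleftrightarrow> weak_multiplier mult A1 R"
proof
  assume weak: "weak_multiplier mult UNIV (lift R)"
  show "weak_multiplier mult A1 R"
    unfolding weak_multiplier_def
  proof (intro ballI)
    fix a b assume "a \<in> A1" "b \<in> A1"
    moreover have "mult a (R (proj b)) = mult (R (proj a)) b"
      using weak unfolding weak_multiplier_def lift_def by blast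
    ultimately show "mult a (R b) = mult (R a) b"
      by (simp add: proj_eq_self)
  qed
next
  assume "weak_multiplier mult A1 R"
  then have "mult (proj x) (R (proj y)) = mult (R (proj x)) (proj y)" for x y
    unfolding weak_multiplier_def using proj_in_A1 by blast
  then show "weak_multiplier mult UNIV (lift R)"
    by (simp add: weak_multiplier_def lift_def)
qed

lemma multiplier_lift_iff:
  assumes "subalgebra scale mult A1"
  shows "multiplier mult UNIV (lift R) \<longleftrightarrow> multiplier mult A1 R"
proof
  assume mult_R: "multiplier mult UNIV (lift R)"
  show "multiplier mult A1 R"
    unfolding multiplier_def
  proof (intro ballI)
    fix a b assume "a \<in> A1" "b \<in> A1"
    moreover have "mult a (R (proj b)) = R (proj (mult a b))
        \<and> R (proj (mult a b)) = mult (R (proj a)) b"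
      using mult_R unfolding multiplier_def lift_def by blast
    ultimately show "mult a (R b) = R (mult a b) \<and> R (mult a b) = mult (R a) b"
      by (simp add: proj_eq_self proj_mult[OF assms])
  qed
next
  assume "multiplier mult A1 R"
  then have "mult (proj x) (R (proj y)) = R (mult (proj x) (proj y))
      \<and> R (mult (proj x) (proj y)) = mult (R (proj x)) (proj y)" for x y
    unfolding multiplier_def using proj_in_A1 by blast
  then show "multiplier mult UNIV (lift R)"
    by (simp add: multiplier_def lift_def proj_mult[OF assms])
qed

lemma lift_restrict:
  assumes "weak_multiplier mult UNIV T" and "range T \<subseteq> A1"
  shows "lift (restrict T A1) = T"
  by (simp add: fun_eq_iff lift_def proj_in_A1 weak_multiplier_proj[OF assms])

lemma inj_on_lift: "inj_on lift (A1 \<rightarrow>\<^sub>E A1)"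
proof (rule inj_onI)
  fix R S assume R: "R \<in> A1 \<rightarrow>\<^sub>E A1" and S: "S \<in> A1 \<rightarrow>\<^sub>E A1" and eq: "lift R = lift S"
  have "R a = S a" if "a \<in> A1" for a
    using fun_cong[OF eq, of a] that by (simp add: lift_def proj_eq_self)
  with R S show "R = S"
    by (rule PiE_ext)
qed

lemma bij_betw_lift:
  assumes lift_iff: "\<And>R. Q (lift R) \<longleftrightarrow> P R"
    and Q_weak: "\<And>T. Q T \<Longrightarrow> weak_multiplier mult UNIV T"
  shows "bij_betw lift {R \<in> A1 \<rightarrow>\<^sub>E A1. P R} {T. Q T \<and> range T \<subseteq> A1}"
proof (rule bij_betw_imageI)
  show "inj_on lift {R \<in> A1 \<rightarrow>\<^sub>E A1. P R}"
    using inj_on_lift by (rule inj_on_subset) blast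
  show "lift ` {R \<in> A1 \<rightarrow>\<^sub>E A1. P R} = {T. Q T \<and> range T \<subseteq> A1}"
  proof (intro equalityI subsetI)
    fix T assume "T \<in> lift ` {R \<in> A1 \<rightarrow>\<^sub>E A1. P R}"
    then obtain R where "R \<in> A1 \<rightarrow>\<^sub>E A1" "P R" "T = lift R"
      by blast
    then show "T \<in> {T. Q T \<and> range T \<subseteq> A1}"
      using lift_iff proj_in_A1 by (auto simp: lift_def)
  next
    fix T assume T: "T \<in> {T. Q T \<and> range T \<subseteq> A1}"
    then have lift_T: "lift (restrict T A1) = T"
      using Q_weak lift_restrict by blast
    moreover have "restrict T A1 \<in> {R \<in> A1 \<rightarrow>\<^sub>E A1. P R}"
      using T lift_iff[of "restrict T A1"] by (auto simp: lift_T)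
    ultimately show "T \<in> lift ` {R \<in> A1 \<rightarrow>\<^sub>E A1. P R}"
      by (metis image_eqI)
  qed
qed

lemma bij_betw_lift_Mults:
  assumes "subalgebra scale mult A1"
  shows "bij_betw lift (Mults mult A1) (Mults1 mult A1)"
proof -
  have "bij_betw lift {R \<in> A1 \<rightarrow>\<^sub>E A1. multiplier mult A1 R}
      {T. multiplier mult UNIV T \<and> range T \<subseteq> A1}"
    by (rule bij_betw_lift) (simp_all add: multiplier_lift_iff[OF assms] multiplier_imp_weak_multiplier)
  moreover have "Mults1 mult A1 = {T. multiplier mult UNIV T \<and> range T \<subseteq> A1}"
    by (auto simp: Mults1_def Mults_def)
  ultimately show ?thesis
    by (simp add: Mults_def)
qed

lemma bij_betw_lift_WMults: "bij_betw lift (WMults mult A1) (WMults1 mult A1)"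
proof -
  have "bij_betw lift {R \<in> A1 \<rightarrow>\<^sub>E A1. weak_multiplier mult A1 R}
      {T. weak_multiplier mult UNIV T \<and> range T \<subseteq> A1}"
    by (rule bij_betw_lift) (simp_all add: weak_multiplier_lift_iff)
  moreover have "WMults1 mult A1 = {T. weak_multiplier mult UNIV T \<and> range T \<subseteq> A1}"
    by (auto simp: WMults1_def WMults_def)
  ultimately show ?thesis
    by (simp add: WMults_def)
qed

lemma lift_fadd: "lift (fadd A1 R S) = (\<lambda>x. lift R x + lift S x)"
  by (simp add: fun_eq_iff lift_def fadd_def proj_in_A1)

lemma lift_fscale: "lift (fscale scale A1 c R) = (\<lambda>x. scale c (lift R x))"
  by (simp add: fun_eq_iff lift_def fscale_def proj_in_A1)

lemma lift_compose:
  assumes "S \<in> A1 \<rightarrow> A1"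
  shows "lift (compose A1 R S) = lift R \<circ> lift S"
proof -
  have "S (proj x) \<in> A1" for x
    using assms proj_in_A1 by blast
  then show ?thesis
    by (simp add: fun_eq_iff lift_def compose_eq proj_in_A1 proj_eq_self)
qed

lemma lift_jordan:
  assumes "R \<in> A1 \<rightarrow> A1" and "S \<in> A1 \<rightarrow> A1"
  shows "lift (jordan A1 R S) = (\<lambda>x. lift R (lift S x) + lift S (lift R x))"
  by (simp add: jordan_def lift_fadd lift_compose assms)

end

theorem theorem3p1:
  fixes scale :: "'k::field \<Rightarrow> 'v::ab_group_add \<Rightarrow> 'v"
    and mult :: "'v \<Rightarrow> 'v \<Rightarrow> 'v"
    and A1 :: "'v set"
    and T T1 T0 :: "'v \<Rightarrow> 'v"
    and \<Phi> :: "('v \<Rightarrow> 'v) \<Rightarrow> ('v \<Rightarrow> 'v)"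
  assumes alg: "algebra_over scale mult"
    and sub: "module.subspace scale A1"
    and dsum_int: "A1 \<inter> ann0 mult = {0}"
    and dsum_span: "\<forall>x. \<exists>a\<in>A1. \<exists>b\<in>ann0 mult. x = a + b"
    and T_split: "\<forall>x. T x = T1 x + T0 x"
    and T1_range: "range T1 \<subseteq> A1"
    and T0_range: "range T0 \<subseteq> ann0 mult"
    and Phi_def: "\<Phi> = (\<lambda>R x. R (proj_along A1 (ann0 mult) x))"
  shows
    "(weak_multiplier mult UNIV T \<longleftrightarrow> weak_multiplier mult UNIV T1)
     \<and> (weak_multiplier mult UNIV T \<longrightarrow>
          Vector_Spaces.linear scale scale T1 \<and> T1 ` ann0 mult = {0})
     \<and> (multiplier mult UNIV T1 \<and> (\<forall>x y. T0 (mult x y) = 0) \<longrightarrow> multiplier mult UNIV T)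
     \<and> (subalgebra scale mult A1 \<longrightarrow> multiplier mult UNIV T \<longrightarrow>
          multiplier mult UNIV T1 \<and> (\<forall>x y. T0 (mult x y) = 0))
     \<and> (subalgebra scale mult A1 \<longrightarrow>
          bij_betw \<Phi> (Mults mult A1) (Mults1 mult A1)
          \<and> (\<forall>R\<in>Mults mult A1. \<forall>S\<in>Mults mult A1.
               \<Phi> (fadd A1 R S) = (\<lambda>x. \<Phi> R x + \<Phi> S x)
               \<and> \<Phi> (compose A1 R S) = \<Phi> R \<circ> \<Phi> S)
          \<and> (\<forall>R\<in>Mults mult A1. \<forall>c. \<Phi> (fscale scale A1 c R) = (\<lambda>x. scale c (\<Phi> R x)))
          \<and> bij_betw \<Phi> (WMults mult A1) (WMults1 mult A1)
          \<and> (\<forall>R\<in>WMults mult A1. \<forall>S\<in>WMults mult A1.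
               \<Phi> (fadd A1 R S) = (\<lambda>x. \<Phi> R x + \<Phi> S x)
               \<and> \<Phi> (jordan A1 R S) = (\<lambda>x. \<Phi> R (\<Phi> S x) + \<Phi> S (\<Phi> R x)))
          \<and> (\<forall>R\<in>WMults mult A1. \<forall>c. \<Phi> (fscale scale A1 c R) = (\<lambda>x. scale c (\<Phi> R x))))"
proof -
  interpret ann0_complement scale mult A1
    using alg sub dsum_int dsum_span
    by (simp add: ann0_complement_def ann0_complement_axioms_def algebra_over_iff_nonassoc_algebra)
  have T_eq: "T = (\<lambda>x. T1 x + T0 x)"
    using T_split by blast
  have "\<Phi> = lift"
    by (simp add: Phi_def fun_eq_iff lift_def)
  moreover have "R \<in> A1 \<rightarrow> A1" if "R \<in> Mults mult A1 \<union> WMults mult A1" for R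
    using that by (auto simp: Mults_def WMults_def)
  moreover have "multiplier mult UNIV T1 \<and> (\<forall>x y. T0 (mult x y) = 0)"
    if "subalgebra scale mult A1" and "multiplier mult UNIV T"
  proof -
    have "T0 (mult x y) = 0" for x y
      using multiplier_ann0_part_vanishes that T1_range T0_range unfolding T_eq by blast
    with that(2) show ?thesis
      unfolding T_eq using multiplier_plus_ann0_iff[OF T0_range] by blast
  qed
  ultimately show ?thesis
    unfolding T_eq
    by (simp add: weak_multiplier_plus_ann0_iff[OF T0_range] multiplier_plus_ann0_iff[OF T0_range]
        weak_multiplier_linear weak_multiplier_image_ann0 T1_range bij_betw_lift_Mults bij_betw_lift_WMults
        lift_fadd lift_fscale lift_compose lift_jordan)
qed

end
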